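(* Let $h\in\mathbb{R}^{2n-1}$ be the impulse response with $h_t=1$ for all $t=1,\dots,2n-1$ (a system of order $1$), and let $\mathcal{H}:\mathbb{R}^{2n-1}\to\mathbb{R}^{n\times n}$ be the Hankel map. Consider the set $$S=\Big\{x/\|x\|_2\ :\ x\in\mathbb{R}^{2n-1}\setminus\{0\},\ \|\mathcal{H}(h+x)\|_*\le\|\mathcal{H}(h)\|_*\Big\}.$$ Then the Gaussian width of $S$ is lower bounded by $Cn^{1/6}$ for some constant $C>0$.
   Context: The Hankel map sends $x=(x_1,\dots,x_{2n-1})$ to the $n\times n$ matrix with $(j,k)$ entry $x_{j+k-1}$. $\|\cdot\|_*$ is the nuclear norm. The Gaussian width of a set $S\subset\mathbb{R}^{2n-1}$ is $w(S)=\mathbb{E}_g\sup_{\gamma\in S}\gamma^\top g$, where $g$ is a standard Gaussian vector in $\mathbb{R}^{2n-1}$. *)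

theory Defs
  imports "HOL-Probability.Probability" "Jordan_Normal_Form.Char_Poly"
begin

text \<open>Vectors in R^m are represented as functions nat => real, with coordinates
  indexed 0..m-1 (coordinate i here is coordinate i+1 of the paper).\<close>

definition hankel :: "nat \<Rightarrow> (nat \<Rightarrow> real) \<Rightarrow> real mat" where
  "hankel n x = mat n n (\<lambda>(j,k). x (j + k))"

text \<open>Nuclear norm = sum of the singular values, the singular values being the square
  roots of the eigenvalues (with algebraic multiplicity) of A^T A.\<close>
definition nuclear_norm :: "real mat \<Rightarrow> real" where
  "nuclear_norm A =
     (let p = char_poly (transpose_mat A * A)
      in \<Sum>e\<in>{e. poly p e = 0}. real (order e p) * sqrt e)"

definition euclid_norm :: "nat \<Rightarrow> (nat \<Rightarrow> real) \<Rightarrow> real" where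
  "euclid_norm m x = sqrt (\<Sum>i<m. (x i)\<^sup>2)"

definition gauss_measure :: "nat \<Rightarrow> (nat \<Rightarrow> real) measure" where
  "gauss_measure m = PiM {..<m} (\<lambda>_. density lborel std_normal_density)"

definition gaussian_width :: "nat \<Rightarrow> (nat \<Rightarrow> real) set \<Rightarrow> real" where
  "gaussian_width m S =
     integral\<^sup>L (gauss_measure m) (\<lambda>g. SUP \<gamma>\<in>S. \<Sum>i<m. \<gamma> i * g i)"

definition ones_impulse :: "nat \<Rightarrow> nat \<Rightarrow> real" where
  "ones_impulse n = (\<lambda>i. if i < 2*n - 1 then 1 else 0)"

definition descent_set :: "nat \<Rightarrow> (nat \<Rightarrow> real) set" where
  "descent_set n =
     {(\<lambda>i. x i / euclid_norm (2*n - 1) x) | x.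
        (\<forall>i\<ge>2*n - 1. x i = 0) \<and> x \<noteq> (\<lambda>_. 0) \<and>
        nuclear_norm (hankel n (\<lambda>i. ones_impulse n i + x i))
          \<le> nuclear_norm (hankel n (ones_impulse n))}"

end

theory Submission
  imports Defs
begin

(* Let t = n^(1/3), d = floor t, c = n/d^2 - 1 and, for a sign vector s,
   x = (c s_0, ..., c s_(d-1), -1, ..., -1).  Then h + x vanishes from coordinate d on, so
   H(h + x) is supported on its leading d x d block with entries at most 1 + c.  Hence
   H(h + x)^T H(h + x) has at most d nonzero eigenvalues, each bounded by its largest absolute
   row sum d^2 (1 + c)^2, and ||H(h + x)||_* <= d^2 (1 + c) = n = ||H(h)||_*.  So x/||x|| lies
   in S for every s, and the choice s = sign g gives
     w(S) >= E (c sum_(i<d) |g_i| - sum_(i>=d) g_i) / ||x|| = c d sqrt(2/pi) / sqrt(d c^2 + 2n - 1 - d),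
   which is of order t^2 / t^(3/2) = n^(1/6). *)

section \<open>Nuclear norms of block-supported matrices\<close>

lemma index_mult_mat_sum:
  assumes "A \<in> carrier_mat n k" "B \<in> carrier_mat k m" "i < n" "j < m"
  shows "(A * B) $$ (i,j) = (\<Sum>l<k. A $$ (i,l) * B $$ (l,j))"
  using assms by (auto simp: scalar_prod_def lessThan_atLeast0 intro!: sum.cong)

lemma char_poly_zero_mat: "char_poly (0\<^sub>m n n :: 'a :: comm_ring_1 mat) = [:0,1:] ^ n"
proof -
  have "diag_mat (0\<^sub>m n n :: 'a mat) = replicate n 0"
    unfolding diag_mat_def list_eq_iff_nth_eq by auto
  then show ?thesis
    by (subst char_poly_upper_triangular[of _ n]) (auto simp: upper_triangular_def prod_list_replicate)
qed

lemma square_zero_one_add_inverse_mat: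
  fixes U :: "'a :: ring_1 mat"
  assumes U: "U \<in> carrier_mat n n" and "U * U = 0\<^sub>m n n"
  shows "(1\<^sub>m n + U) * (1\<^sub>m n - U) = 1\<^sub>m n" and "(1\<^sub>m n - U) * (1\<^sub>m n + U) = 1\<^sub>m n"
proof -
  have "(1\<^sub>m n + U) * (1\<^sub>m n - U) = 1\<^sub>m n * (1\<^sub>m n - U) + U * (1\<^sub>m n - U)"
    using U by (intro add_mult_distrib_mat) auto
  also have "\<dots> = (1\<^sub>m n - U) + (U - U * U)"
    using U by (subst mult_minus_distrib_mat[of U n n]) auto
  finally show "(1\<^sub>m n + U) * (1\<^sub>m n - U) = 1\<^sub>m n"
    using U \<open>U * U = 0\<^sub>m n n\<close> by (auto intro!: eq_matI)
  have "(1\<^sub>m n - U) * (1\<^sub>m n + U) = 1\<^sub>m n * (1\<^sub>m n + U) - U * (1\<^sub>m n + U)"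
    using U by (intro minus_mult_distrib_mat) auto
  also have "\<dots> = (1\<^sub>m n + U) - (U + U * U)"
    using U by (subst mult_add_distrib_mat[of U n n]) auto
  finally show "(1\<^sub>m n - U) * (1\<^sub>m n + U) = 1\<^sub>m n"
    using U \<open>U * U = 0\<^sub>m n n\<close> by (auto intro!: eq_matI)
qed

text \<open>The shear \<open>P = 1 + U\<close>, with \<open>U\<close> the first column below the diagonal, conjugates
  the constant matrix to the upper triangular matrix \<open>T\<close> whose only nonzero row is the first.\<close>
lemma char_poly_const_mat:
  fixes a :: "'a :: comm_ring_1"
  assumes "n \<ge> 1"
  shows "char_poly (mat n n (\<lambda>_. a)) = [:- (of_nat n * a), 1:] * [:0,1:] ^ (n - 1)"
proof -
  define K where "K = (mat n n (\<lambda>_. a) :: 'a mat)"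
  define U where "U = (mat n n (\<lambda>(i,j). if j = 0 \<and> i \<noteq> 0 then 1 else 0) :: 'a mat)"
  define T where "T = (mat n n (\<lambda>(i,j). if i = 0 then if j = 0 then of_nat n * a else a else 0) :: 'a mat)"
  define P where "P = 1\<^sub>m n + U"
  define Q where "Q = 1\<^sub>m n - U"
  have carrier: "K \<in> carrier_mat n n" "U \<in> carrier_mat n n" "T \<in> carrier_mat n n"
    "P \<in> carrier_mat n n" "Q \<in> carrier_mat n n"
    unfolding K_def U_def T_def P_def Q_def by auto
  have UU: "U * U = 0\<^sub>m n n"
  proof (rule eq_matI)
    fix i j assume "i < dim_row (0\<^sub>m n n :: 'a mat)" "j < dim_col (0\<^sub>m n n :: 'a mat)"
    then show "(U * U) $$ (i,j) = 0\<^sub>m n n $$ (i,j)"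
      by (subst index_mult_mat_sum[OF carrier(2,2)]) (auto simp: U_def intro!: sum.neutral)
  qed (use carrier in auto)
  have PQ: "P * Q = 1\<^sub>m n" "Q * P = 1\<^sub>m n"
    unfolding P_def Q_def using square_zero_one_add_inverse_mat[OF carrier(2) UU] by auto
  have KP: "K * P = P * T"
  proof (rule eq_matI)
    fix i j assume "i < dim_row (P * T)" "j < dim_col (P * T)"
    then have ij: "i < n" "j < n" using carrier by auto
    have "(K * P) $$ (i,j) = (\<Sum>l<n. if j = 0 \<or> l = j then a else 0)"
      unfolding index_mult_mat_sum[OF carrier(1,4) ij]
      by (auto simp: K_def P_def U_def ij intro!: sum.cong)
    also have "\<dots> = T $$ (0,j)"
      using ij by (auto simp: T_def)
    also have "\<dots> = (\<Sum>l<n. if l = 0 then T $$ (0,j) else 0)"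
      using assms by simp
    also have "\<dots> = (P * T) $$ (i,j)"
      unfolding index_mult_mat_sum[OF carrier(4,3) ij]
      by (rule sum.cong) (auto simp: P_def U_def T_def ij)
    finally show "(K * P) $$ (i,j) = (P * T) $$ (i,j)" .
  qed (use carrier in auto)
  have "K = P * T * Q"
    using carrier by (metis KP PQ(1) assoc_mult_mat mult_carrier_mat right_mult_one_mat)
  then have "similar_mat K T"
    using carrier PQ by (intro similar_matI[of K T P Q n]) auto
  then have "char_poly K = char_poly T"
    by (rule char_poly_similar)
  also have "\<dots> = (\<Prod>x\<leftarrow>diag_mat T. [:- x, 1:])"
    by (rule char_poly_upper_triangular[OF carrier(3)]) (auto simp: upper_triangular_def T_def)
  also have "diag_mat T = (of_nat n * a) # replicate (n - 1) 0"
    using assms unfolding diag_mat_def list_eq_iff_nth_eq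
    by (auto simp: T_def nth_Cons split: nat.splits)
  finally show ?thesis
    unfolding K_def by (simp add: prod_list_replicate)
qed

lemma nuclear_norm_const_mat: "nuclear_norm (mat n n (\<lambda>_. a)) = real n * \<bar>a\<bar>"
proof (cases "n = 0")
  case True
  then have "transpose_mat (mat n n (\<lambda>_. a)) * mat n n (\<lambda>_. a) = 0\<^sub>m 0 0"
    by (auto intro!: eq_matI)
  then show ?thesis
    using True by (simp add: nuclear_norm_def char_poly_zero_mat)
next
  case False
  define b where "b = real n * (real n * a\<^sup>2)"
  define p where "p = [:- b, 1:] * [:0, 1:] ^ (n - 1)"
  have "transpose_mat (mat n n (\<lambda>_. a)) * mat n n (\<lambda>_. a) = mat n n (\<lambda>_. real n * a\<^sup>2)"
    by (rule eq_matI) (auto simp: scalar_prod_def power2_eq_square)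
  then have cp: "char_poly (transpose_mat (mat n n (\<lambda>_. a)) * mat n n (\<lambda>_. a)) = p"
    using False by (simp add: char_poly_const_mat p_def b_def)
  have "p \<noteq> 0"
    unfolding p_def by (intro no_zero_divisors power_not_zero) auto
  have "nuclear_norm (mat n n (\<lambda>_. a)) = (\<Sum>e\<in>{b}. real (order e p) * sqrt e)"
    unfolding nuclear_norm_def Let_def cp
    by (rule sum.mono_neutral_right) (auto simp: poly_roots_finite[OF \<open>p \<noteq> 0\<close>] p_def)
  also have "\<dots> = real n * \<bar>a\<bar>"
  proof (cases "b = 0")
    case False
    have "order b p = order b [:- b, 1:] + order b ([:0, 1:] ^ (n - 1))"
      unfolding p_def by (rule order_mult) (use \<open>p \<noteq> 0\<close> p_def in auto)
    then have "order b p = 1"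
      using False order_power_n_n[of b 1] by (simp add: order_0I)
    then show ?thesis
      by (simp add: b_def real_sqrt_mult)
  qed (auto simp: b_def)
  finally show ?thesis .
qed

lemma hankel_ones_impulse: "hankel n (ones_impulse n) = mat n n (\<lambda>_. 1)"
  unfolding hankel_def ones_impulse_def by (intro eq_matI) auto

lemma char_poly_block_support:
  fixes M :: "'a :: idom mat"
  assumes M: "M \<in> carrier_mat n n" and "d \<le> n"
    and zero: "\<And>i j. i < n \<Longrightarrow> j < n \<Longrightarrow> d \<le> i \<or> d \<le> j \<Longrightarrow> M $$ (i,j) = 0"
  shows "char_poly M = char_poly (mat d d (\<lambda>ij. M $$ ij)) * [:0,1:] ^ (n - d)"
proof -
  define M' where "M' = mat d d (\<lambda>ij. M $$ ij)"
  define Z where "Z = (0\<^sub>m (n - d) (n - d) :: 'a mat)"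
  have "char_poly_matrix M =
      four_block_mat (char_poly_matrix M') (0\<^sub>m d (n - d)) (0\<^sub>m (n - d) d) (char_poly_matrix Z)"
    using M \<open>d \<le> n\<close> zero by (intro eq_matI) (auto simp: char_poly_matrix_def M'_def Z_def)
  then have "char_poly M = char_poly M' * char_poly Z"
    unfolding char_poly_def
    by (simp add: det_four_block_mat_lower_left_zero[of _ d _ "n - d"] M'_def Z_def)
  then show ?thesis
    by (simp add: M'_def Z_def char_poly_zero_mat)
qed

lemma abs_eigenvalue_le_row_sum:
  fixes M :: "real mat"
  assumes M: "M \<in> carrier_mat n n" and "eigenvalue M e"
    and rows: "\<And>i. i < n \<Longrightarrow> (\<Sum>j<n. \<bar>M $$ (i,j)\<bar>) \<le> R"
  shows "\<bar>e\<bar> \<le> R"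
proof -
  obtain v where v: "v \<in> carrier_vec n" "v \<noteq> 0\<^sub>v n" "M *\<^sub>v v = e \<cdot>\<^sub>v v"
    using \<open>eigenvalue M e\<close> M unfolding eigenvalue_def eigenvector_def by auto
  have "n \<noteq> 0"
    using v(1,2) by (auto intro!: eq_vecI)
  then obtain i0 where i0: "i0 < n" "\<bar>v $ i0\<bar> = Max ((\<lambda>i. \<bar>v $ i\<bar>) ` {..<n})"
    using Max_in[of "(\<lambda>i. \<bar>v $ i\<bar>) ` {..<n}"] by fastforce
  have max: "\<bar>v $ j\<bar> \<le> \<bar>v $ i0\<bar>" if "j < n" for j
    unfolding i0(2) using that by (intro Max_ge) auto
  have "\<bar>v $ i0\<bar> > 0"
  proof (rule ccontr)
    assume "\<not> \<bar>v $ i0\<bar> > 0"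
    then have "v = 0\<^sub>v n"
      using v(1) max by (intro eq_vecI) (auto simp: less_le abs_le_zero_iff dest: max)
    with v(2) show False ..
  qed
  have "\<bar>e\<bar> * \<bar>v $ i0\<bar> = \<bar>\<Sum>j<n. M $$ (i0,j) * v $ j\<bar>"
    using arg_cong[OF v(3), of "\<lambda>w. w $ i0"] M v(1) i0(1)
    by (simp add: abs_mult scalar_prod_def lessThan_atLeast0 mult.commute)
  also have "\<dots> \<le> (\<Sum>j<n. \<bar>M $$ (i0,j)\<bar> * \<bar>v $ i0\<bar>)"
    by (rule order_trans[OF sum_abs]) (auto simp: abs_mult intro!: sum_mono mult_left_mono max)
  also have "\<dots> \<le> R * \<bar>v $ i0\<bar>"
    unfolding sum_distrib_right[symmetric] using rows[OF i0(1)] by (simp add: mult_right_mono)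
  finally show ?thesis
    using \<open>\<bar>v $ i0\<bar> > 0\<close> by simp
qed

lemma nuclear_norm_le_of_gram_block_support:
  fixes A :: "real mat"
  defines "M \<equiv> transpose_mat A * A"
  assumes A: "A \<in> carrier_mat n n" and "d \<le> n" and "0 \<le> R"
    and zero: "\<And>i j. i < n \<Longrightarrow> j < n \<Longrightarrow> d \<le> i \<or> d \<le> j \<Longrightarrow> M $$ (i,j) = 0"
    and rows: "\<And>i. i < n \<Longrightarrow> (\<Sum>j<n. \<bar>M $$ (i,j)\<bar>) \<le> R"
  shows "nuclear_norm A \<le> real d * sqrt R"
proof -
  have M: "M \<in> carrier_mat n n"
    unfolding M_def using A by auto
  define q where "q = char_poly (mat d d (\<lambda>ij. M $$ ij))"
  define p where "p = q * [:0,1:] ^ (n - d)"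
  have cp: "char_poly M = p"
    unfolding p_def q_def by (rule char_poly_block_support[OF M \<open>d \<le> n\<close> zero])
  have deg: "degree q = d" and "q \<noteq> 0"
    using degree_monic_char_poly[of "mat d d (\<lambda>ij. M $$ ij)" d] by (auto simp: q_def)
  then have "p \<noteq> 0"
    unfolding p_def by (intro no_zero_divisors power_not_zero) auto
  have term_le: "real (order e p) * sqrt e \<le> real (order e q) * sqrt R" if "poly p e = 0" for e
  proof (cases "e = 0")
    case False
    then have "order e p = order e q"
      using \<open>p \<noteq> 0\<close> by (simp add: p_def order_mult order_0I)
    moreover have "\<bar>e\<bar> \<le> R"
      using that cp eigenvalue_root_char_poly[OF M] by (intro abs_eigenvalue_le_row_sum[OF M _ rows]) auto
    ultimately show ?thesis
      by (simp add: mult_left_mono real_sqrt_le_mono)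
  qed (use \<open>0 \<le> R\<close> in simp)
  have "nuclear_norm A = (\<Sum>e | poly p e = 0. real (order e p) * sqrt e)"
    unfolding nuclear_norm_def Let_def M_def[symmetric] cp ..
  also have "\<dots> \<le> (\<Sum>e | poly p e = 0. real (order e q) * sqrt R)"
    by (intro sum_mono term_le) auto
  also have "\<dots> = (\<Sum>e | poly q e = 0. real (order e q)) * sqrt R"
    unfolding sum_distrib_right[symmetric] using \<open>p \<noteq> 0\<close>
    by (intro arg_cong[where f = "\<lambda>x. x * sqrt R"] sum.mono_neutral_right)
      (auto simp: p_def order_0I poly_roots_finite)
  also have "\<dots> \<le> real d * sqrt R"
    using sum_order_le_degree[OF \<open>q \<noteq> 0\<close>] \<open>0 \<le> R\<close>
    by (intro mult_right_mono) (auto simp: deg simp flip: of_nat_sum)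
  finally show ?thesis .
qed

lemma index_gram_mat_block_support:
  assumes A: "A \<in> carrier_mat n n" and "d \<le> n"
    and zero: "\<And>i j. i < n \<Longrightarrow> j < n \<Longrightarrow> d \<le> i \<or> d \<le> j \<Longrightarrow> A $$ (i,j) = 0"
    and "i < n" "j < n"
  shows "(transpose_mat A * A) $$ (i,j) = (\<Sum>k<d. A $$ (k,i) * A $$ (k,j))"
proof -
  have "(transpose_mat A * A) $$ (i,j) = (\<Sum>k<n. A $$ (k,i) * A $$ (k,j))"
    using assms by (simp add: scalar_prod_def lessThan_atLeast0)
  also have "\<dots> = (\<Sum>k<d. A $$ (k,i) * A $$ (k,j))"
    using assms by (intro sum.mono_neutral_right) (auto simp: zero)
  finally show ?thesis .
qed

lemma nuclear_norm_le_of_block_support: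
  fixes A :: "real mat"
  assumes A: "A \<in> carrier_mat n n" and "d \<le> n"
    and zero: "\<And>i j. i < n \<Longrightarrow> j < n \<Longrightarrow> d \<le> i \<or> d \<le> j \<Longrightarrow> A $$ (i,j) = 0"
    and bound: "\<And>i j. i < n \<Longrightarrow> j < n \<Longrightarrow> \<bar>A $$ (i,j)\<bar> \<le> b"
  shows "nuclear_norm A \<le> real d ^ 2 * b"
proof -
  define M where "M = transpose_mat A * A"
  have M: "M $$ (i,j) = (\<Sum>k<d. A $$ (k,i) * A $$ (k,j))" if "i < n" "j < n" for i j
    unfolding M_def using A \<open>d \<le> n\<close> zero that by (rule index_gram_mat_block_support)
  have entry: "\<bar>M $$ (i,j)\<bar> \<le> real d * b\<^sup>2" if "i < n" "j < n" for i j
  proof -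
    have "\<bar>M $$ (i,j)\<bar> \<le> (\<Sum>k<d. \<bar>A $$ (k,i)\<bar> * \<bar>A $$ (k,j)\<bar>)"
      unfolding M[OF that] abs_mult[symmetric] by (rule sum_abs)
    also have "\<dots> \<le> (\<Sum>k<d. b * b)"
      using that \<open>d \<le> n\<close>
      by (intro sum_mono mult_mono bound) (auto intro: order_trans[OF abs_ge_zero bound])
    finally show ?thesis
      by (simp add: power2_eq_square)
  qed
  have rows: "(\<Sum>j<n. \<bar>M $$ (i,j)\<bar>) \<le> real d * (real d * b\<^sup>2)" if "i < n" for i
  proof -
    have "(\<Sum>j<n. \<bar>M $$ (i,j)\<bar>) = (\<Sum>j<d. \<bar>M $$ (i,j)\<bar>)"
      using that \<open>d \<le> n\<close> by (intro sum.mono_neutral_right) (auto simp: M zero)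
    also have "\<dots> \<le> (\<Sum>j<d. real d * b\<^sup>2)"
      using that \<open>d \<le> n\<close> by (intro sum_mono entry) auto
    finally show ?thesis
      by simp
  qed
  have "nuclear_norm A \<le> real d * sqrt (real d * (real d * b\<^sup>2))"
    unfolding M_def
    by (rule nuclear_norm_le_of_gram_block_support[OF A \<open>d \<le> n\<close> _ _ rows[unfolded M_def]])
      (auto simp: M[unfolded M_def] zero)
  also have "\<dots> = real d ^ 2 * b"
  proof (cases "d = 0")
    case False
    then have "0 \<le> b"
      using bound[of 0 0] \<open>d \<le> n\<close> by force
    then show ?thesis
      by (simp add: real_sqrt_mult power2_eq_square)
  qed simp
  finally show ?thesis .
qed

section \<open>A family of descent directions\<close>

lemma abs_le_euclid_norm:
  assumes "i < m"
  shows "\<bar>x i\<bar> \<le> euclid_norm m x"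
proof -
  have "(x i)\<^sup>2 \<le> (\<Sum>j<m. (x j)\<^sup>2)"
    using assms by (intro member_le_sum) auto
  then show ?thesis
    unfolding euclid_norm_def by (metis real_sqrt_abs real_sqrt_le_mono)
qed

lemma descent_set_bounded:
  assumes "\<gamma> \<in> descent_set n" "i < 2*n - 1"
  shows "\<bar>\<gamma> i\<bar> \<le> 1"
proof -
  obtain x where "\<gamma> = (\<lambda>i. x i / euclid_norm (2*n - 1) x)"
    using assms(1) unfolding descent_set_def by blast
  then show ?thesis
    using abs_le_euclid_norm[OF assms(2), of x]
    by (cases "euclid_norm (2*n - 1) x = 0") (auto simp: abs_divide divide_le_eq_1)
qed

lemma le_of_square_mul_eq:
  fixes c :: real
  assumes "0 \<le> c" and "real d ^ 2 * (1 + c) = real n"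
  shows "d \<le> n"
proof -
  have "real d \<le> real d ^ 2"
    by (metis le_square of_nat_mono of_nat_power power2_eq_square)
  also have "\<dots> \<le> real n"
    using assms by (simp flip: assms(2) add: mult_le_cancel_left1)
  finally show ?thesis
    by simp
qed

definition descent_witness :: "nat \<Rightarrow> nat \<Rightarrow> real \<Rightarrow> (nat \<Rightarrow> real) \<Rightarrow> nat \<Rightarrow> real" where
  "descent_witness n d c s = (\<lambda>i. if i < d then c * s i else if i < 2*n - 1 then -1 else 0)"

lemma euclid_norm_descent_witness:
  assumes "d \<le> 2*n - 1" and "\<And>i. \<bar>s i\<bar> = 1"
  shows "euclid_norm (2*n - 1) (descent_witness n d c s) = sqrt (real d * c\<^sup>2 + real (2*n - 1 - d))"
proof -
  have "(\<Sum>i<2*n - 1. (descent_witness n d c s i)\<^sup>2)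
      = (\<Sum>i<d. (descent_witness n d c s i)\<^sup>2) + (\<Sum>i\<in>{d..<2*n - 1}. (descent_witness n d c s i)\<^sup>2)"
    using assms(1) by (simp add: lessThan_atLeast0 sum.atLeastLessThan_concat)
  also have "\<dots> = (\<Sum>i<d. c\<^sup>2) + (\<Sum>i\<in>{d..<2*n - 1}. 1)"
    using assms(2) by (intro arg_cong2[where f = "(+)"] sum.cong)
      (auto simp: descent_witness_def power_mult_distrib abs_square_eq_1)
  finally show ?thesis
    unfolding euclid_norm_def by simp
qed

lemma descent_witness_normalized_mem:
  assumes "2 \<le> n" and "0 \<le> c" and d: "real d ^ 2 * (1 + c) = real n"
    and s: "\<And>i. \<bar>s i\<bar> \<le> 1"
  defines "x \<equiv> descent_witness n d c s"
  shows "(\<lambda>i. x i / euclid_norm (2*n - 1) x) \<in> descent_set n"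
proof -
  have "d \<le> n"
    using \<open>0 \<le> c\<close> d by (rule le_of_square_mul_eq)
  define y where "y = (\<lambda>i. if i < d then 1 + c * s i else 0)"
  have "(\<lambda>i. ones_impulse n i + x i) = y"
    using \<open>d \<le> n\<close> \<open>2 \<le> n\<close> by (intro ext) (auto simp: y_def x_def descent_witness_def ones_impulse_def)
  moreover have "\<bar>y i\<bar> \<le> 1 + c" for i
    using s[of i] \<open>0 \<le> c\<close> mult_left_le[of "\<bar>s i\<bar>" c]
    by (auto simp: y_def abs_mult intro: order_trans[OF abs_triangle_ineq])
  then have "nuclear_norm (hankel n y) \<le> real d ^ 2 * (1 + c)"
    using \<open>d \<le> n\<close>
    by (intro nuclear_norm_le_of_block_support) (auto simp: hankel_def y_def)
  moreover have "nuclear_norm (hankel n (ones_impulse n)) = real n"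
    by (simp add: hankel_ones_impulse nuclear_norm_const_mat)
  moreover have "x d = -1"
    using \<open>d \<le> n\<close> \<open>2 \<le> n\<close> by (auto simp: x_def descent_witness_def)
  then have "x \<noteq> (\<lambda>_. 0)"
    by force
  moreover have "\<forall>i\<ge>2*n - 1. x i = 0"
    using \<open>d \<le> n\<close> \<open>2 \<le> n\<close> by (auto simp: x_def descent_witness_def)
  ultimately show ?thesis
    unfolding descent_set_def using d by auto
qed

section \<open>Gaussian widths\<close>

lemma rational_l1_approx:
  fixes g :: "nat \<Rightarrow> real"
  assumes "0 < e"
  shows "\<exists>q\<in>PiE {..<m} (\<lambda>_. \<rat>). (\<Sum>i<m. \<bar>g i - q i\<bar>) < e"
proof (cases "m = 0")
  case True
  then show ?thesis
    using assms by (intro bexI[of _ "\<lambda>_. undefined"]) auto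
next
  case False
  have "\<exists>r\<in>\<rat>. \<bar>g i - r\<bar> < e / m" for i
  proof -
    obtain r where "r \<in> \<rat>" "g i - e / m < r" "r < g i + e / m"
      using Rats_dense_in_real[of "g i - e / m" "g i + e / m"] assms False by auto
    then show ?thesis
      by (intro bexI[of _ r]) auto
  qed
  then obtain r where r: "\<And>i. r i \<in> \<rat>" "\<And>i. \<bar>g i - r i\<bar> < e / m"
    by metis
  have "(\<Sum>i<m. \<bar>g i - restrict r {..<m} i\<bar>) < (\<Sum>i<m. e / m)"
    using False r(2) by (intro sum_strict_mono) auto
  then show ?thesis
    using False r(1) by (intro bexI[of _ "restrict r {..<m}"]) auto
qed

text \<open>Such an \<open>f\<close> is the supremum of the countably many measurable functions
  \<open>g \<mapsto> f q - \<parallel>g - q\<parallel>\<^sub>1\<close> with \<open>q\<close> rational.\<close>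
lemma borel_measurable_PiM_l1_lipschitz:
  fixes f :: "(nat \<Rightarrow> real) \<Rightarrow> real"
  assumes lip: "\<And>g g'. f g \<le> f g' + (\<Sum>i<m. \<bar>g i - g' i\<bar>)" and N: "sets N = sets borel"
  shows "f \<in> borel_measurable (PiM {..<m} (\<lambda>_. N))"
proof -
  define Q where "Q = PiE {..<m} (\<lambda>_. \<rat> :: real set)"
  have bdd: "f q - (\<Sum>i<m. \<bar>g i - q i\<bar>) \<le> f g" for g q
    using lip[of q g] by (simp add: abs_minus_commute)
  have "restrict (\<lambda>_. 0) {..<m} \<in> Q"
    unfolding Q_def by auto
  then have "Q \<noteq> {}"
    by blast
  have sup_eq: "f = (\<lambda>g. SUP q\<in>Q. f q - (\<Sum>i<m. \<bar>g i - q i\<bar>))"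
  proof (rule ext, rule antisym)
    fix g
    show "f g \<le> (SUP q\<in>Q. f q - (\<Sum>i<m. \<bar>g i - q i\<bar>))"
    proof (rule field_le_epsilon)
      fix e :: real assume "0 < e"
      then obtain q where "q \<in> Q" and q: "(\<Sum>i<m. \<bar>g i - q i\<bar>) < e / 2"
        using rational_l1_approx[where e = "e / 2" and g = g and m = m] unfolding Q_def by auto
      then have "f q - (\<Sum>i<m. \<bar>g i - q i\<bar>) \<le> (SUP q\<in>Q. f q - (\<Sum>i<m. \<bar>g i - q i\<bar>))"
        by (intro cSUP_upper bdd_aboveI2[OF bdd])
      then show "f g \<le> (SUP q\<in>Q. f q - (\<Sum>i<m. \<bar>g i - q i\<bar>)) + e"
        using lip[of g q] q by linarith
    qed
  qed (use \<open>Q \<noteq> {}\<close> bdd in \<open>rule cSUP_least\<close>)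
  have "(\<lambda>g. SUP q\<in>Q. f q - (\<Sum>i<m. \<bar>g i - q i\<bar>)) \<in> borel_measurable (PiM {..<m} (\<lambda>_. N))"
  proof (rule borel_measurable_cSUP)
    show "countable Q"
      unfolding Q_def by (intro countable_PiE) (auto simp: countable_rat)
    show "bdd_above ((\<lambda>q. f q - (\<Sum>i<m. \<bar>g i - q i\<bar>)) ` Q)" for g
      by (intro bdd_aboveI2[OF bdd])
    have component: "(\<lambda>g. g i) \<in> borel_measurable (PiM {..<m} (\<lambda>_. N))" if "i \<in> {..<m}" for i
      using measurable_component_singleton[of i "{..<m}" "\<lambda>_. N"] that
      by (simp add: measurable_cong_sets[OF refl N])
    show "(\<lambda>g. f q - (\<Sum>i<m. \<bar>g i - q i\<bar>)) \<in> borel_measurable (PiM {..<m} (\<lambda>_. N))" for q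
      by (intro borel_measurable_diff borel_measurable_sum borel_measurable_abs component) auto
  qed
  then show ?thesis
    by (subst sup_eq)
qed

definition support_fun :: "nat \<Rightarrow> (nat \<Rightarrow> real) set \<Rightarrow> (nat \<Rightarrow> real) \<Rightarrow> real" where
  "support_fun m S g = (SUP \<gamma>\<in>S. \<Sum>i<m. \<gamma> i * g i)"

lemma abs_inner_le_l1_norm:
  fixes \<gamma> g :: "nat \<Rightarrow> real"
  assumes "\<And>i. i < m \<Longrightarrow> \<bar>\<gamma> i\<bar> \<le> 1"
  shows "\<bar>\<Sum>i<m. \<gamma> i * g i\<bar> \<le> (\<Sum>i<m. \<bar>g i\<bar>)"
proof -
  have "\<bar>\<Sum>i<m. \<gamma> i * g i\<bar> \<le> (\<Sum>i<m. \<bar>\<gamma> i\<bar> * \<bar>g i\<bar>)"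
    using sum_abs[of "\<lambda>i. \<gamma> i * g i" "{..<m}"] by (simp add: abs_mult)
  also have "\<dots> \<le> (\<Sum>i<m. \<bar>g i\<bar>)"
    using assms by (intro sum_mono) (simp add: mult_left_le_one_le)
  finally show ?thesis .
qed

context
  fixes m :: nat and S :: "(nat \<Rightarrow> real) set"
  assumes nonempty: "S \<noteq> {}" and bounded: "\<And>\<gamma> i. \<gamma> \<in> S \<Longrightarrow> i < m \<Longrightarrow> \<bar>\<gamma> i\<bar> \<le> 1"
begin

lemma inner_le_support_fun: "\<gamma> \<in> S \<Longrightarrow> (\<Sum>i<m. \<gamma> i * g i) \<le> support_fun m S g"
  unfolding support_fun_def
  by (rule cSUP_upper) (auto intro!: bdd_aboveI2 abs_le_D1[OF abs_inner_le_l1_norm] bounded)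

lemma support_fun_le_add_l1_dist: "support_fun m S g \<le> support_fun m S g' + (\<Sum>i<m. \<bar>g i - g' i\<bar>)"
  unfolding support_fun_def[of m S g]
proof (rule cSUP_least[OF nonempty])
  fix \<gamma> assume "\<gamma> \<in> S"
  have "(\<Sum>i<m. \<gamma> i * g i) - (\<Sum>i<m. \<gamma> i * g' i) = (\<Sum>i<m. \<gamma> i * (g i - g' i))"
    by (simp add: sum_subtractf right_diff_distrib)
  also have "\<dots> \<le> (\<Sum>i<m. \<bar>g i - g' i\<bar>)"
    using \<open>\<gamma> \<in> S\<close> bounded by (intro abs_le_D1[OF abs_inner_le_l1_norm]) auto
  finally show "(\<Sum>i<m. \<gamma> i * g i) \<le> support_fun m S g' + (\<Sum>i<m. \<bar>g i - g' i\<bar>)"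
    using inner_le_support_fun[OF \<open>\<gamma> \<in> S\<close>, of g'] by linarith
qed

lemma abs_support_fun_le: "\<bar>support_fun m S g\<bar> \<le> (\<Sum>i<m. \<bar>g i\<bar>)"
proof -
  obtain \<gamma> where "\<gamma> \<in> S"
    using nonempty by auto
  then have "- (\<Sum>i<m. \<bar>g i\<bar>) \<le> (\<Sum>i<m. \<gamma> i * g i)"
    using abs_inner_le_l1_norm[where \<gamma> = \<gamma> and g = g and m = m] bounded by (simp add: abs_le_iff)
  then have "- (\<Sum>i<m. \<bar>g i\<bar>) \<le> support_fun m S g"
    using inner_le_support_fun[OF \<open>\<gamma> \<in> S\<close>] by (rule order_trans)
  moreover have "support_fun m S g \<le> (\<Sum>i<m. \<bar>g i\<bar>)"
    using support_fun_le_add_l1_dist[of g "\<lambda>_. 0"] by (simp add: support_fun_def nonempty)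
  ultimately show ?thesis
    by linarith
qed

end

lemma has_bochner_integral_gauss_component:
  fixes f :: "real \<Rightarrow> real"
  assumes [measurable]: "f \<in> borel_measurable borel" and "i < m"
    and "has_bochner_integral lborel (\<lambda>x. std_normal_density x * f x) v"
  shows "has_bochner_integral (gauss_measure m) (\<lambda>g. f (g i)) v"
proof -
  let ?N = "density lborel std_normal_density"
  have component: "(\<lambda>g. g i) \<in> measurable (gauss_measure m) ?N"
    unfolding gauss_measure_def using \<open>i < m\<close> by (intro measurable_component_singleton) auto
  have "distr (gauss_measure m) ?N (\<lambda>g. g i) = ?N"
    unfolding gauss_measure_def
    by (rule distr_PiM_component) (use \<open>i < m\<close> prob_space_normal_density in auto)
  moreover have "has_bochner_integral ?N f v"
    using assms(3) by (intro has_bochner_integral_density) auto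
  ultimately show ?thesis
    using integrable_distr_eq[OF component, of f] integral_distr[OF component, of f]
    by (simp add: has_bochner_integral_iff)
qed

lemma has_bochner_integral_gauss_abs_component:
  "i < m \<Longrightarrow> has_bochner_integral (gauss_measure m) (\<lambda>g. \<bar>g i\<bar>) (sqrt (2 / pi))"
  using has_bochner_integral_gauss_component[of abs i m] std_normal_moment_abs_odd[of 0] by simp

lemma has_bochner_integral_gauss_component_id:
  "i < m \<Longrightarrow> has_bochner_integral (gauss_measure m) (\<lambda>g. g i) 0"
  using has_bochner_integral_gauss_component[of "\<lambda>x. x" i m] std_normal_moment_odd[of 0] by simp

lemma integral_le_gaussian_width:
  assumes bounded: "\<And>\<gamma> i. \<gamma> \<in> S \<Longrightarrow> i < m \<Longrightarrow> \<bar>\<gamma> i\<bar> \<le> 1"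
    and attained: "\<And>g. \<exists>\<gamma>\<in>S. G g \<le> (\<Sum>i<m. \<gamma> i * g i)"
    and "integrable (gauss_measure m) G"
  shows "integral\<^sup>L (gauss_measure m) G \<le> gaussian_width m S"
proof -
  have "S \<noteq> {}"
    using attained by blast
  have le_support_fun: "(\<Sum>i<m. \<gamma> i * g i) \<le> support_fun m S g" if "\<gamma> \<in> S" for \<gamma> g
    by (rule inner_le_support_fun) (simp_all add: \<open>S \<noteq> {}\<close> bounded that)
  have lipschitz: "support_fun m S g \<le> support_fun m S g' + (\<Sum>i<m. \<bar>g i - g' i\<bar>)" for g g'
    by (rule support_fun_le_add_l1_dist) (simp_all add: \<open>S \<noteq> {}\<close> bounded)
  have abs_le: "\<bar>support_fun m S g\<bar> \<le> (\<Sum>i<m. \<bar>g i\<bar>)" for g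
    by (rule abs_support_fun_le) (simp_all add: \<open>S \<noteq> {}\<close> bounded)
  have "has_bochner_integral (gauss_measure m) (\<lambda>g. \<Sum>i<m. \<bar>g i\<bar>) (\<Sum>i<m. sqrt (2 / pi))"
    by (intro has_bochner_integral_sum has_bochner_integral_gauss_abs_component) auto
  then have "integrable (gauss_measure m) (\<lambda>g. \<Sum>i<m. \<bar>g i\<bar>)"
    by (simp add: has_bochner_integral_iff)
  moreover have "support_fun m S \<in> borel_measurable (gauss_measure m)"
    unfolding gauss_measure_def using lipschitz
    by (intro borel_measurable_PiM_l1_lipschitz) auto
  ultimately have "integrable (gauss_measure m) (support_fun m S)"
    by (rule Bochner_Integration.integrable_bound)
      (use abs_le in auto)
  moreover have "G g \<le> support_fun m S g" for g
  proof -
    obtain \<gamma> where "\<gamma> \<in> S" "G g \<le> (\<Sum>i<m. \<gamma> i * g i)"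
      using attained by blast
    then show ?thesis
      using le_support_fun by (meson order_trans)
  qed
  ultimately show ?thesis
    unfolding gaussian_width_def support_fun_def[symmetric]
    using \<open>integrable (gauss_measure m) G\<close> by (auto intro: integral_mono)
qed

lemma gaussian_width_descent_set_ge:
  assumes "2 \<le> n" and "0 \<le> c" and d: "real d ^ 2 * (1 + c) = real n"
  shows "c * real d * sqrt (2 / pi) / sqrt (real d * c\<^sup>2 + real (2*n - 1 - d))
           \<le> gaussian_width (2*n - 1) (descent_set n)"
proof -
  define m where "m = 2*n - 1"
  define r where "r = sqrt (real d * c\<^sup>2 + real (m - d))"
  have "d \<le> m"
    using le_of_square_mul_eq[OF \<open>0 \<le> c\<close> d] \<open>2 \<le> n\<close> by (simp add: m_def)
  define G where "G g = (c * (\<Sum>i<d. \<bar>g i\<bar>) - (\<Sum>i\<in>{d..<m}. g i)) / r" for g :: "nat \<Rightarrow> real"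
  have "has_bochner_integral (gauss_measure m) G ((c * (\<Sum>i<d. sqrt (2 / pi)) - (\<Sum>i\<in>{d..<m}. 0)) / r)"
    unfolding G_def using \<open>d \<le> m\<close>
    by (intro has_bochner_integral_divide_zero has_bochner_integral_diff has_bochner_integral_mult_right
        has_bochner_integral_sum has_bochner_integral_gauss_abs_component
        has_bochner_integral_gauss_component_id) auto
  then have G: "has_bochner_integral (gauss_measure m) G (c * real d * sqrt (2 / pi) / r)"
    by (simp add: mult.assoc)
  have "\<exists>\<gamma>\<in>descent_set n. G g \<le> (\<Sum>i<m. \<gamma> i * g i)" for g
  proof -
    define s where "s i = (if 0 \<le> g i then 1 else -1 :: real)" for i
    define x where "x = descent_witness n d c s"
    have "(\<Sum>i<m. x i * g i) = (\<Sum>i<d. x i * g i) + (\<Sum>i\<in>{d..<m}. x i * g i)"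
      using \<open>d \<le> m\<close> by (simp add: lessThan_atLeast0 sum.atLeastLessThan_concat)
    also have "(\<Sum>i<d. x i * g i) = c * (\<Sum>i<d. \<bar>g i\<bar>)"
      unfolding sum_distrib_left by (rule sum.cong) (auto simp: x_def descent_witness_def s_def)
    also have "(\<Sum>i\<in>{d..<m}. x i * g i) = - (\<Sum>i\<in>{d..<m}. g i)"
      unfolding sum_negf[symmetric] by (rule sum.cong) (auto simp: x_def descent_witness_def m_def)
    finally have "(\<Sum>i<m. x i / euclid_norm m x * g i) = G g"
      using euclid_norm_descent_witness[OF \<open>d \<le> m\<close>[unfolded m_def], of s c]
      by (simp add: G_def r_def m_def x_def s_def sum_divide_distrib[symmetric])
    moreover have "(\<lambda>i. x i / euclid_norm m x) \<in> descent_set n"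
      unfolding x_def m_def using \<open>2 \<le> n\<close> \<open>0 \<le> c\<close> d
      by (intro descent_witness_normalized_mem) (auto simp: s_def)
    ultimately show ?thesis
      by force
  qed
  then have "integral\<^sup>L (gauss_measure m) G \<le> gaussian_width m (descent_set n)"
    using G descent_set_bounded unfolding m_def
    by (intro integral_le_gaussian_width) (auto simp: has_bochner_integral_iff)
  then show ?thesis
    using G by (simp add: has_bochner_integral_iff m_def r_def)
qed

lemma width_lower_bound_arith:
  fixes t d c B :: real
  assumes t: "2 \<le> t" and d: "t / 2 \<le> d" "d \<le> t" and c: "d\<^sup>2 * (1 + c) = t ^ 3"
    and B: "0 \<le> B" "B \<le> 2 * t ^ 3"
  shows "0 \<le> c" and "t\<^sup>2 / (40 * sqrt (t ^ 3)) \<le> c * d * sqrt (2 / pi) / sqrt (d * c\<^sup>2 + B)"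
proof -
  have "0 < d"
    using t d by linarith
  have "d\<^sup>2 * t \<le> d\<^sup>2 * (1 + c)"
    using c d t power_mono[OF d(2), of 2] by (simp add: power3_eq_cube power2_eq_square mult_right_mono)
  then have "t / 2 \<le> c"
    using \<open>0 < d\<close> t by (simp add: mult_le_cancel_left_pos)
  then show c_nonneg: "0 \<le> c"
    using t by linarith
  have "t\<^sup>2 / 4 * (1 + c) \<le> d\<^sup>2 * (1 + c)"
    using power_mono[OF d(1), of 2] c_nonneg t by (intro mult_right_mono) (auto simp: power_divide)
  then have "t\<^sup>2 * (1 + c) \<le> t\<^sup>2 * (4 * t)"
    using c by (simp add: power3_eq_cube power2_eq_square field_simps)
  then have "c \<le> 4 * t"
    using t by (simp add: mult_le_cancel_left_pos)
  have "t\<^sup>2 / 8 \<le> c * d * sqrt (2 / pi)"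
  proof -
    have "1 / 2 \<le> sqrt (2 / pi)"
      by (rule real_le_rsqrt) (use pi_less_4 pi_gt_zero in \<open>simp add: divide_simps power2_eq_square\<close>)
    moreover have "t\<^sup>2 / 4 \<le> c * d"
      using mult_mono[OF \<open>t / 2 \<le> c\<close> d(1)] c_nonneg t by (simp add: power2_eq_square)
    ultimately show ?thesis
      using mult_mono[of "t\<^sup>2 / 4" "c * d" "1 / 2" "sqrt (2 / pi)"] c_nonneg \<open>0 < d\<close> by simp
  qed
  moreover have "sqrt (d * c\<^sup>2 + B) \<le> 5 * sqrt (t ^ 3)"
  proof -
    have "d * c\<^sup>2 \<le> t * (4 * t)\<^sup>2"
      using d t c_nonneg \<open>c \<le> 4 * t\<close> by (intro mult_mono power_mono) auto
    then have "d * c\<^sup>2 + B \<le> 5\<^sup>2 * t ^ 3"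
      using B by (simp add: power2_eq_square power3_eq_cube)
    then have "sqrt (d * c\<^sup>2 + B) \<le> sqrt (5\<^sup>2 * t ^ 3)"
      by (rule real_sqrt_le_mono)
    then show ?thesis
      by (simp add: real_sqrt_mult)
  qed
  moreover have "0 < sqrt (d * c\<^sup>2 + B)"
    using \<open>0 < d\<close> \<open>t / 2 \<le> c\<close> t B by (intro real_sqrt_gt_zero add_pos_nonneg) auto
  ultimately have "(t\<^sup>2 / 8) / (5 * sqrt (t ^ 3)) \<le> c * d * sqrt (2 / pi) / sqrt (d * c\<^sup>2 + B)"
    using t c_nonneg \<open>0 < d\<close> by (intro frac_le) auto
  then show "t\<^sup>2 / (40 * sqrt (t ^ 3)) \<le> c * d * sqrt (2 / pi) / sqrt (d * c\<^sup>2 + B)"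
    by simp
qed

lemma cube_root_parameters:
  fixes n :: nat
  assumes "8 \<le> n" and d_def: "d = nat \<lfloor>real n powr (1/3)\<rfloor>" and c_def: "c = real n / real d ^ 2 - 1"
  shows "0 \<le> c" and "real d ^ 2 * (1 + c) = real n"
    and "real n powr (1/6) / 40 \<le> c * real d * sqrt (2 / pi) / sqrt (real d * c\<^sup>2 + real (2*n - 1 - d))"
proof -
  define t where "t = real n powr (1/3)"
  have t3: "t ^ 3 = real n"
    using \<open>8 \<le> n\<close> by (simp add: t_def powr_realpow[symmetric] powr_powr)
  have "2 \<le> t"
  proof (rule ccontr)
    assume "\<not> 2 \<le> t"
    then have "t ^ 3 < 2 ^ 3"
      by (intro power_strict_mono) (auto simp: t_def)
    then show False
      using \<open>8 \<le> n\<close> t3 by simp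
  qed
  then have "t / 2 \<le> real d" "real d \<le> t"
    unfolding d_def t_def[symmetric] by linarith+
  then show d: "real d ^ 2 * (1 + c) = real n"
    using \<open>2 \<le> t\<close> by (simp add: c_def)
  have "0 \<le> c" and ratio: "t\<^sup>2 / (40 * sqrt (t ^ 3))
      \<le> c * real d * sqrt (2 / pi) / sqrt (real d * c\<^sup>2 + real (2*n - 1 - d))"
    using width_lower_bound_arith[OF \<open>2 \<le> t\<close> \<open>t / 2 \<le> real d\<close> \<open>real d \<le> t\<close>,
        where c = c and B = "real (2*n - 1 - d)"] d t3
    by auto
  then show "0 \<le> c"
    by simp
  have "real n powr (1/6) / 40 = real n powr (2/3) / real n powr (1/2) / 40"
    using \<open>8 \<le> n\<close> by (simp add: powr_diff[symmetric])
  also have "\<dots> = t\<^sup>2 / (40 * sqrt (t ^ 3))"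
    unfolding t3 using \<open>8 \<le> n\<close>
    by (simp add: t_def powr_realpow[symmetric] powr_powr powr_half_sqrt)
  also note ratio
  finally show "real n powr (1/6) / 40
      \<le> c * real d * sqrt (2 / pi) / sqrt (real d * c\<^sup>2 + real (2*n - 1 - d))" .
qed

theorem theorem2:
  shows "\<exists>C>0. \<exists>N. \<forall>n\<ge>N.
           gaussian_width (2*n - 1) (descent_set n) \<ge> C * real n powr (1/6)"
proof (intro exI[of _ "1/40"] exI[of _ "8::nat"] conjI allI impI)
  fix n :: nat assume "8 \<le> n"
  define d where "d = nat \<lfloor>real n powr (1/3)\<rfloor>"
  define c where "c = real n / real d ^ 2 - 1"
  note parameters = cube_root_parameters[OF \<open>8 \<le> n\<close> d_def c_def]
  have "c * real d * sqrt (2 / pi) / sqrt (real d * c\<^sup>2 + real (2*n - 1 - d))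
      \<le> gaussian_width (2*n - 1) (descent_set n)"
    using \<open>8 \<le> n\<close> parameters(1,2) by (intro gaussian_width_descent_set_ge) auto
  then show "1/40 * real n powr (1/6) \<le> gaussian_width (2*n - 1) (descent_set n)"
    using parameters(3) by linarith
qed simp

end
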